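(* Let $\mathcal{M}$ be a matroid on $[n]$ and $\gamma$ a basic $\ell$-cover of $\mathcal{M}$. Then the focal complex $\mathcal{M}(\gamma)$ is (the independence complex of) a submatroid of $\mathcal{M}$, and $r(\mathcal{M}(\gamma))=r(\mathcal{M})$.
   Context: Matroids are identified with their independence complexes; $r$ denotes rank. For $\gamma:[n]\to\mathbb{N}_0$ and $S\subseteq[n]$, $\gamma(S)=\sum_{i\in S}\gamma(i)$. $\gamma$ is an $\ell$-cover of $\mathcal{M}$ if $\gamma(F)\ge\ell$ for every basis $F$ of $\mathcal{M}$, and basic if minimal among $\ell$-covers in the pointwise order. $\mathcal{M}(\gamma)$ is the simplicial complex generated by the bases $F$ of $\mathcal{M}$ with $\gamma(F)=\ell$. *)

theory Defs
  imports Main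
begin

definition indep_matroid :: "nat set \<Rightarrow> nat set set \<Rightarrow> bool" where
  "indep_matroid E I \<longleftrightarrow> finite E \<and> (\<forall>X\<in>I. X \<subseteq> E) \<and> {} \<in> I
     \<and> (\<forall>X Y. X \<in> I \<longrightarrow> Y \<subseteq> X \<longrightarrow> Y \<in> I)
     \<and> (\<forall>X Y. X \<in> I \<longrightarrow> Y \<in> I \<longrightarrow> card X < card Y \<longrightarrow> (\<exists>y\<in>Y - X. insert y X \<in> I))"

definition is_basis :: "nat set set \<Rightarrow> nat set \<Rightarrow> bool" where
  "is_basis I F \<longleftrightarrow> F \<in> I \<and> (\<forall>G\<in>I. F \<subseteq> G \<longrightarrow> G = F)"

definition mrank :: "nat set set \<Rightarrow> nat" where
  "mrank I = Max (card ` I)"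

definition is_cover :: "nat set set \<Rightarrow> nat \<Rightarrow> (nat \<Rightarrow> nat) \<Rightarrow> bool" where
  "is_cover I l \<gamma> \<longleftrightarrow> (\<forall>F. is_basis I F \<longrightarrow> sum \<gamma> F \<ge> l)"

definition is_basic_cover :: "nat set \<Rightarrow> nat set set \<Rightarrow> nat \<Rightarrow> (nat \<Rightarrow> nat) \<Rightarrow> bool" where
  "is_basic_cover E I l \<gamma> \<longleftrightarrow> is_cover I l \<gamma> \<and>
     (\<forall>\<gamma>'. is_cover I l \<gamma>' \<longrightarrow> (\<forall>i\<in>E. \<gamma>' i \<le> \<gamma> i) \<longrightarrow> (\<forall>i\<in>E. \<gamma>' i = \<gamma> i))"

definition focal_complex :: "nat set set \<Rightarrow> nat \<Rightarrow> (nat \<Rightarrow> nat) \<Rightarrow> nat set set" where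
  "focal_complex I l \<gamma> = {G. \<exists>F. is_basis I F \<and> sum \<gamma> F = l \<and> G \<subseteq> F}"

end

theory Submission
  imports Defs
begin

text \<open>
  Call a basis tight if its weight is exactly l. By minimality of a basic cover, tight bases exist:
  otherwise decreasing the cover by one at any element of a basis still leaves an l-cover.
  The symmetric exchange property turns two tight bases F1, F2 and x \<in> F1 - F2 into bases
  F1 - x + y and F2 - y + x whose weights add up to 2l; as both weigh at least l, both are tight.
  So the tight bases satisfy basis exchange, which gives the augmentation axiom for the complex they
  generate, and this complex has the rank of the matroid because it contains a basis.
\<close>

lemma card_insert_Diff_swap:
  assumes "finite B" "x \<in> B" "y \<notin> B"
  shows "card (insert y (B - {x})) = card B"
proof -
  have "card B > 0" using assms(1,2) card_gt_0_iff by blast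
  then show ?thesis using assms by (simp add: card_Diff_singleton)
qed

lemma sum_insert_Diff_swap:
  fixes g :: "'a \<Rightarrow> 'b::comm_monoid_add"
  assumes "finite B" "x \<in> B" "y \<notin> B"
  shows "sum g (insert y (B - {x})) + g x = sum g B + g y"
  using assms by (simp add: sum.remove ac_simps)

locale matroid =
  fixes E :: "nat set" and I :: "nat set set"
  assumes indep_matroid: "indep_matroid E I"
begin

lemma indep_subset_ground: "X \<in> I \<Longrightarrow> X \<subseteq> E"
  using indep_matroid unfolding indep_matroid_def by blast

lemma finite_indep: "X \<in> I \<Longrightarrow> finite X"
  using indep_matroid indep_subset_ground unfolding indep_matroid_def by (meson finite_subset)

lemma finite_indeps: "finite I"
proof -
  have "I \<subseteq> Pow E" using indep_subset_ground by blast
  then show ?thesis using indep_matroid unfolding indep_matroid_def by (meson finite_Pow_iff finite_subset)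
qed

lemma empty_indep: "{} \<in> I"
  using indep_matroid unfolding indep_matroid_def by blast

lemma indep_subset: "X \<in> I \<Longrightarrow> Y \<subseteq> X \<Longrightarrow> Y \<in> I"
  using indep_matroid unfolding indep_matroid_def by blast

lemma indep_augment: "X \<in> I \<Longrightarrow> Y \<in> I \<Longrightarrow> card X < card Y \<Longrightarrow> \<exists>y\<in>Y - X. insert y X \<in> I"
  using indep_matroid unfolding indep_matroid_def by blast

lemma card_le_mrank: "X \<in> I \<Longrightarrow> card X \<le> mrank I"
  unfolding mrank_def using finite_indeps by simp

lemma ex_indep_card_mrank: "\<exists>B\<in>I. card B = mrank I"
proof -
  have "mrank I \<in> card ` I"
    unfolding mrank_def using finite_indeps empty_indep by (intro Max_in) auto
  then show ?thesis by auto
qed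

lemma basis_indep: "is_basis I B \<Longrightarrow> B \<in> I"
  unfolding is_basis_def by blast

lemma basis_subset_ground: "is_basis I B \<Longrightarrow> B \<subseteq> E"
  using indep_subset_ground unfolding is_basis_def by blast

lemma finite_basis: "is_basis I B \<Longrightarrow> finite B"
  using finite_indep unfolding is_basis_def by blast

lemma is_basis_iff_card: "is_basis I F \<longleftrightarrow> F \<in> I \<and> card F = mrank I"
proof
  assume F: "is_basis I F"
  then have "F \<in> I" by (rule basis_indep)
  moreover have "\<not> card F < mrank I"
  proof
    assume "card F < mrank I"
    then obtain y where "y \<notin> F" "insert y F \<in> I"
      using ex_indep_card_mrank indep_augment[OF \<open>F \<in> I\<close>] by fastforce
    then show False using F unfolding is_basis_def by blast
  qed
  ultimately show "F \<in> I \<and> card F = mrank I" using card_le_mrank[of F] by simp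
next
  assume F: "F \<in> I \<and> card F = mrank I"
  have "G = F" if "G \<in> I" "F \<subseteq> G" for G
    using that F card_le_mrank[of G] finite_indep card_seteq by metis
  then show "is_basis I F" using F unfolding is_basis_def by blast
qed

lemma ex_basis: "\<exists>B. is_basis I B"
  using ex_indep_card_mrank is_basis_iff_card by blast

lemma ex_max_card_indep_between:
  assumes "A \<in> I" "A \<subseteq> S"
  shows "\<exists>G\<in>I. A \<subseteq> G \<and> G \<subseteq> S \<and> (\<forall>B\<in>I. B \<subseteq> S \<longrightarrow> card B \<le> card G)"
proof -
  let ?P = "\<lambda>G. G \<in> I \<and> A \<subseteq> G \<and> G \<subseteq> S"
  have "\<exists>G. ?P G \<and> (\<forall>H. ?P H \<longrightarrow> card H \<le> card G)"
    by (rule ex_has_greatest_nat[where k = A and b = "Suc (mrank I)"])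
      (use assms card_le_mrank in \<open>auto simp: less_Suc_eq_le\<close>)
  then obtain G where G: "?P G" and max: "\<And>H. ?P H \<Longrightarrow> card H \<le> card G"
    by blast
  have "card B \<le> card G" if B: "B \<in> I" "B \<subseteq> S" for B
  proof (rule ccontr)
    assume "\<not> card B \<le> card G"
    then obtain y where "y \<in> B - G" "insert y G \<in> I"
      using indep_augment[of G B] G B by auto
    then have "card (insert y G) \<le> card G" using G B by (intro max) auto
    then show False using \<open>y \<in> B - G\<close> G finite_indep by simp
  qed
  then show ?thesis using G by blast
qed

lemma is_basis_exchange:
  assumes B: "is_basis I B" and xy: "x \<in> B" "y \<notin> B" and indep: "insert y (B - {x}) \<in> I"
  shows "is_basis I (insert y (B - {x}))"
  using card_insert_Diff_swap[OF finite_basis[OF B] xy] B indep is_basis_iff_card by simp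

text \<open>The set of y with B - y + x independent is the fundamental circuit of x in B, minus x.\<close>

lemma insert_exchangeable_dependent:
  assumes B: "is_basis I B" and "x \<notin> B"
  shows "insert x {y\<in>B. insert x (B - {y}) \<in> I} \<notin> I"
proof
  let ?D = "{y\<in>B. insert x (B - {y}) \<in> I}"
  assume "insert x ?D \<in> I"
  then obtain G where G: "G \<in> I" "insert x ?D \<subseteq> G" "G \<subseteq> insert x B"
      and max: "\<forall>C\<in>I. C \<subseteq> insert x B \<longrightarrow> card C \<le> card G"
    using ex_max_card_indep_between[of "insert x ?D" "insert x B"] by blast
  have BI: "B \<in> I" "card B = mrank I" using B is_basis_iff_card by auto
  have "card B \<le> card G" using max BI(1) by blast
  then have cardG: "card G = card B" using card_le_mrank[OF G(1)] BI(2) by simp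
  then have "G \<noteq> insert x B" using \<open>x \<notin> B\<close> finite_basis[OF B] by auto
  then obtain y where y: "y \<in> B" "y \<notin> G" using G(2,3) by blast
  have "G \<subseteq> insert x (B - {y})" using G(3) y by blast
  moreover have "card (insert x (B - {y})) = card G"
    using card_insert_Diff_swap[OF finite_basis[OF B] y(1) \<open>x \<notin> B\<close>] cardG by simp
  ultimately have "G = insert x (B - {y})" using finite_basis[OF B] by (simp add: card_subset_eq)
  then have "y \<in> ?D" using G(1) y(1) by simp
  then show False using y(2) G(2) by blast
qed

lemma basis_symmetric_exchange:
  assumes B1: "is_basis I B1" and B2: "is_basis I B2" and x: "x \<in> B1" "x \<notin> B2"
  shows "\<exists>y\<in>B2 - B1. is_basis I (insert y (B1 - {x})) \<and> is_basis I (insert x (B2 - {y}))"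
proof -
  define D where "D = {y\<in>B2. insert x (B2 - {y}) \<in> I}"
  have "D \<subseteq> B2" unfolding D_def by blast
  then have "D \<in> I" using indep_subset basis_indep[OF B2] by blast
  have xD: "insert x D \<notin> I" using insert_exchangeable_dependent[OF B2 x(2)] unfolding D_def .
  have B1I: "B1 \<in> I" "B1 - {x} \<in> I" using basis_indep[OF B1] indep_subset by auto
  obtain G where G: "G \<in> I" "D \<subseteq> G" "G \<subseteq> (B1 - {x}) \<union> D"
      and max: "\<forall>C\<in>I. C \<subseteq> (B1 - {x}) \<union> D \<longrightarrow> card C \<le> card G"
    using ex_max_card_indep_between[OF \<open>D \<in> I\<close>, of "(B1 - {x}) \<union> D"] by blast
  have "card (B1 - {x}) < card G"
  proof (rule ccontr)
    assume "\<not> ?thesis"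
    then have "card G < card B1"
      using x(1) finite_basis[OF B1] card_Diff1_less[of B1 x] by linarith
    then obtain b where b: "b \<in> B1 - G" "insert b G \<in> I" using indep_augment G(1) B1I(1) by blast
    show False
    proof (cases "b = x")
      case True
      then show False using xD indep_subset[OF b(2)] G(2) by blast
    next
      case False
      then have "insert b G \<subseteq> (B1 - {x}) \<union> D" using b(1) G(3) by blast
      then have "card (insert b G) \<le> card G" using max b(2) by blast
      then show False using b finite_indep[OF G(1)] by simp
    qed
  qed
  then obtain y where y: "y \<in> G - (B1 - {x})" "insert y (B1 - {x}) \<in> I"
    using indep_augment[OF B1I(2) G(1)] by blast
  then have "y \<in> D" using G(3) by blast
  then have "y \<in> B2 - B1" "insert x (B2 - {y}) \<in> I" using x(2) y(1) unfolding D_def by auto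
  then show ?thesis using is_basis_exchange B1 B2 x y(2) by blast
qed

lemma basic_cover_ex_tight_basis:
  fixes \<gamma> :: "nat \<Rightarrow> nat"
  assumes basic: "is_basic_cover E I l \<gamma>"
  shows "\<exists>F. is_basis I F \<and> sum \<gamma> F = l"
proof (rule ccontr)
  assume none: "\<not> ?thesis"
  have tight: "l < sum \<gamma> F" if "is_basis I F" for F
  proof -
    have "l \<le> sum \<gamma> F" using basic that unfolding is_basic_cover_def is_cover_def by blast
    moreover have "sum \<gamma> F \<noteq> l" using none that by blast
    ultimately show ?thesis by simp
  qed
  obtain B where B: "is_basis I B" using ex_basis by blast
  then obtain i where i: "i \<in> B" "0 < \<gamma> i" using tight[OF B] by (metis not_less0 neq0_conv sum.neutral)
  define \<gamma>' where "\<gamma>' = \<gamma>(i := \<gamma> i - 1)"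
  have drop_le_1: "sum \<gamma> F \<le> sum \<gamma>' F + 1" if "finite F" for F
  proof -
    have "sum \<gamma> F \<le> sum (\<lambda>j. \<gamma>' j + (if j = i then 1 else 0)) F"
      by (rule sum_mono) (auto simp: \<gamma>'_def)
    also have "\<dots> = sum \<gamma>' F + (if i \<in> F then 1 else 0)"
      using that by (simp add: sum.distrib)
    also have "\<dots> \<le> sum \<gamma>' F + 1" by simp
    finally show ?thesis .
  qed
  have "is_cover I l \<gamma>'"
    unfolding is_cover_def
  proof (intro allI impI)
    fix F assume F: "is_basis I F"
    show "l \<le> sum \<gamma>' F" using tight[OF F] drop_le_1[OF finite_basis[OF F]] by linarith
  qed
  moreover have "\<forall>j\<in>E. \<gamma>' j \<le> \<gamma> j" unfolding \<gamma>'_def by simp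
  ultimately have "\<gamma>' i = \<gamma> i"
    using basic basis_subset_ground[OF B] i(1) unfolding is_basic_cover_def by blast
  then show False using i(2) unfolding \<gamma>'_def by simp
qed

end

locale matroid_cover = matroid +
  fixes l :: nat and \<gamma> :: "nat \<Rightarrow> nat"
  assumes is_cover: "is_cover I l \<gamma>"
begin

definition is_tight_basis :: "nat set \<Rightarrow> bool" where
  "is_tight_basis F \<longleftrightarrow> is_basis I F \<and> sum \<gamma> F = l"

lemma focal_complex_eq: "focal_complex I l \<gamma> = {G. \<exists>F. is_tight_basis F \<and> G \<subseteq> F}"
  unfolding focal_complex_def is_tight_basis_def by blast

lemma tight_basis_exchange:
  assumes F1: "is_tight_basis F1" and F2: "is_tight_basis F2" and x: "x \<in> F1" "x \<notin> F2"
  shows "\<exists>y\<in>F2 - F1. is_tight_basis (insert y (F1 - {x}))"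
proof -
  obtain y where y: "y \<in> F2 - F1"
      and B1: "is_basis I (insert y (F1 - {x}))" and B2: "is_basis I (insert x (F2 - {y}))"
    using basis_symmetric_exchange F1 F2 x unfolding is_tight_basis_def by blast
  have "finite F1" "finite F2" using F1 F2 finite_basis unfolding is_tight_basis_def by auto
  then have "sum \<gamma> (insert y (F1 - {x})) + sum \<gamma> (insert x (F2 - {y})) = sum \<gamma> F1 + sum \<gamma> F2"
    using sum_insert_Diff_swap[of F1 x y \<gamma>] sum_insert_Diff_swap[of F2 y x \<gamma>] x y by simp
  moreover have "l \<le> sum \<gamma> (insert y (F1 - {x}))" "l \<le> sum \<gamma> (insert x (F2 - {y}))"
    using is_cover B1 B2 unfolding is_cover_def by auto
  ultimately have "sum \<gamma> (insert y (F1 - {x})) = l"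
    using F1 F2 unfolding is_tight_basis_def by linarith
  then show ?thesis using y B1 unfolding is_tight_basis_def by blast
qed

lemma focal_complex_augment:
  assumes X: "X \<in> focal_complex I l \<gamma>" and Y: "Y \<in> focal_complex I l \<gamma>" and XY: "card X < card Y"
  shows "\<exists>y\<in>Y - X. insert y X \<in> focal_complex I l \<gamma>"
proof -
  obtain F2 where F2: "is_tight_basis F2" "Y \<subseteq> F2" using Y focal_complex_eq by blast
  obtain F1 where "is_tight_basis F1" "X \<subseteq> F1" using X focal_complex_eq by blast
  then obtain F where F: "is_tight_basis F" "X \<subseteq> F"
      and min: "\<And>F'. is_tight_basis F' \<Longrightarrow> X \<subseteq> F' \<Longrightarrow> card (F - F2) \<le> card (F' - F2)"
    using ex_has_least_nat[of "\<lambda>F. is_tight_basis F \<and> X \<subseteq> F" F1 "\<lambda>F. card (F - F2)"] by blast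
  have fin: "finite F" "finite F2" using F(1) F2(1) finite_basis unfolding is_tight_basis_def by auto
  have "F - F2 \<subseteq> X"
  proof
    fix z assume z: "z \<in> F - F2"
    show "z \<in> X"
    proof (rule ccontr)
      assume "z \<notin> X"
      obtain y where y: "y \<in> F2 - F" "is_tight_basis (insert y (F - {z}))"
        using tight_basis_exchange F(1) F2(1) z by blast
      have "insert y (F - {z}) - F2 = (F - F2) - {z}" using y z by blast
      moreover have "card ((F - F2) - {z}) < card (F - F2)"
        using z fin(1) by (intro card_Diff1_less) auto
      ultimately have "card (insert y (F - {z}) - F2) < card (F - F2)" by simp
      moreover have "X \<subseteq> insert y (F - {z})" using F(2) \<open>z \<notin> X\<close> by blast
      ultimately show False using min[OF y(2)] by simp
    qed
  qed
  show ?thesis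
  proof (cases "\<exists>y\<in>Y - X. y \<in> F")
    case True
    then show ?thesis using F focal_complex_eq by blast
  next
    case False
    then have "F - X \<subseteq> F2 - Y" using \<open>F - F2 \<subseteq> X\<close> by blast
    then have "card (F - X) \<le> card (F2 - Y)" using fin by (simp add: card_mono)
    moreover have "card F = card F2" using F(1) F2(1) is_basis_iff_card unfolding is_tight_basis_def by simp
    moreover have "card Y \<le> card F2" using F2(2) fin by (simp add: card_mono)
    ultimately have False
      using XY F(2) F2(2) fin by (simp add: card_Diff_subset finite_subset)
    then show ?thesis ..
  qed
qed

lemma focal_complex_subset: "focal_complex I l \<gamma> \<subseteq> I"
  using indep_subset basis_indep unfolding focal_complex_eq is_tight_basis_def by blast

lemma indep_matroid_focal_complex:
  assumes "\<exists>F. is_tight_basis F"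
  shows "indep_matroid E (focal_complex I l \<gamma>)"
  unfolding indep_matroid_def
proof (intro conjI allI impI ballI)
  show "finite E" using indep_matroid unfolding indep_matroid_def by blast
  show "X \<subseteq> E" if "X \<in> focal_complex I l \<gamma>" for X
    using that focal_complex_subset indep_subset_ground by blast
  show "{} \<in> focal_complex I l \<gamma>" using assms unfolding focal_complex_eq by blast
  show "Y \<in> focal_complex I l \<gamma>" if "X \<in> focal_complex I l \<gamma>" "Y \<subseteq> X" for X Y
    using that unfolding focal_complex_eq by blast
  show "\<exists>y\<in>Y - X. insert y X \<in> focal_complex I l \<gamma>"
    if "X \<in> focal_complex I l \<gamma>" "Y \<in> focal_complex I l \<gamma>" "card X < card Y" for X Y
    using focal_complex_augment that by blast
qed

lemma mrank_focal_complex: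
  assumes "\<exists>F. is_tight_basis F"
  shows "mrank (focal_complex I l \<gamma>) = mrank I"
proof -
  interpret focal: matroid E "focal_complex I l \<gamma>"
    using indep_matroid_focal_complex[OF assms] by unfold_locales
  obtain F where F: "is_tight_basis F" using assms by blast
  then have "F \<in> focal_complex I l \<gamma>" "card F = mrank I"
    using focal_complex_eq is_basis_iff_card unfolding is_tight_basis_def by auto
  then have "mrank I \<le> mrank (focal_complex I l \<gamma>)" using focal.card_le_mrank by metis
  moreover obtain B where "B \<in> focal_complex I l \<gamma>" "card B = mrank (focal_complex I l \<gamma>)"
    using focal.ex_indep_card_mrank by blast
  then have "mrank (focal_complex I l \<gamma>) \<le> mrank I" using focal_complex_subset card_le_mrank by force
  ultimately show ?thesis by simp
qed

end

theorem corollary3p6: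
  fixes n l :: nat and I :: "nat set set" and \<gamma> :: "nat \<Rightarrow> nat"
  assumes "indep_matroid {1..n} I"
    and "is_basic_cover {1..n} I l \<gamma>"
  shows "indep_matroid {1..n} (focal_complex I l \<gamma>)
         \<and> focal_complex I l \<gamma> \<subseteq> I
         \<and> mrank (focal_complex I l \<gamma>) = mrank I"
proof -
  interpret matroid_cover "{1..n}" I l \<gamma>
    using assms unfolding is_basic_cover_def by unfold_locales auto
  have "\<exists>F. is_tight_basis F"
    using basic_cover_ex_tight_basis[OF assms(2)] unfolding is_tight_basis_def .
  then show ?thesis
    using indep_matroid_focal_complex focal_complex_subset mrank_focal_complex by blast
qed

end
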